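(* Let $p\ge 1$, $N\ge 2p-1$, $0<T\le\infty$. (a) Let $(a_0(t),\dots,a_N(t))$, $t\in[0,T)$, be a solution with all $a_i(t)\neq 0$ of the finite system $$\dot a_i=a_i\Big(\prod_{j=1}^{p}a_{i+j}-\prod_{j=1}^{p}a_{i-j}\Big),\quad i=0,\dots,N,\qquad a_l=0\ \text{for } l<0 \text{ or } l>N.$$ Let $L1_N(t)$ be the $(N+2)\times(N+2)$ matrix (indices $0,\dots,N+1$) with $(L1_N)_{i,i+p}=1$ for $0\le i\le N+1-p$, $(L1_N)_{i+1,i}=a_i$ for $0\le i\le N$, other entries zero; let $S^l_k(t)=(L1_N(t)^k)_{l-1,0}$ for $l=1,\dots,p$, $k\ge0$, and $\alpha_{i,j}(t)=S^{\operatorname{rem}(i,p)+1}_{\lfloor i/p\rfloor+j}(t)$ for $i,j\ge0$. Let $C_0(t),\dots,C_{N+1}(t)$ be the coefficients with $\alpha_{i,j}=\sum_{v=0}^{N+1}C_v\alpha_{i,j-v-1}$ for all $i\ge0$, $j\ge N+2$ (equivalently $S^l_k=\sum_{v=0}^{N+1}C_vS^l_{k-v-1}$ for all $k\ge N+2$, $l=1,\dots,p$), and $D_0(t),\dots,D_{N+1}(t)$ the coefficients with $\alpha_{i,j}=\sum_{v=0}^{N+1}D_v\alpha_{i-v-1,j}$ for all $i\ge N+2$, $j\ge0$. Then each $C_v$ and each $D_v$ is constant in $t$ (a first integral of the $a$-system). (b) Let $(b_0(t),\dots,b_N(t))$, $t\in[0,T)$, be a solution with all $b_i(t)\ne0$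 of $$\dot b_i=b_i\Big(\sum_{j=1}^{p}b_{i+j}-\sum_{j=1}^{p}b_{i-j}\Big),\quad i=0,\dots,N,\qquad b_l=0\ \text{for } l<0\text{ or } l>N.$$ Let $L2_N(t)$ be the $(N+p+1)\times(N+p+1)$ matrix (indices $0,\dots,N+p$) with $(L2_N)_{i,i+1}=1$ for $0\le i\le N+p-1$, $(L2_N)_{i+p,i}=b_i$ for $0\le i\le N$, other entries zero; let $\tilde S^l_k(t)=(L2_N(t)^k)_{0,l-1}$, $l=1,\dots,p$, $k\ge0$, and let $\tilde C_0(t),\dots,\tilde C_{N+p}(t)$ be the coefficients with $\tilde S^l_k=\sum_{v=0}^{N+p}\tilde C_v\tilde S^l_{k-v-1}$ for all $k\ge N+p+1$, $l=1,\dots,p$. Then each $\tilde C_v$ is constant in $t$ (a first integral of the $b$-system).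
   Context: $\operatorname{rem}(a,b)$ is the remainder of $a$ modulo $b$. Standing facts from the paper: for each $t$ the infinite matrix $H=(\alpha_{i,j})_{i,j\ge0}$ has rank $N+2$ and its leading principal minors $\Delta_k=\det(\alpha_{i,j})_{i,j=0}^k$, $k=0,\dots,N+1$, are nonzero; analogously for the $b$-system the matrix $(\tilde S^{\operatorname{rem}(j,p)+1}_{i+\lfloor j/p\rfloor})_{i,j\ge0}$ has rank $N+p+1$ with nonzero leading principal minors of orders $1,\dots,N+p+1$. Hence the coefficients $C_v,D_v,\tilde C_v$ (the "finite rank coefficients") exist and are uniquely determined for each $t$. A first integral is a quantity constant along every such solution. *)

theory Defs
  imports Complex_Main "HOL-Library.Extended_Real" "Jordan_Normal_Form.Matrix"
begin

definition tdom :: "ereal \<Rightarrow> real set" where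
  "tdom T = {t. 0 \<le> t \<and> ereal t < T}"

definition zext :: "nat \<Rightarrow> (nat \<Rightarrow> real) \<Rightarrow> int \<Rightarrow> real" where
  "zext N x l = (if 0 \<le> l \<and> l \<le> int N then x (nat l) else 0)"

definition sol_a :: "nat \<Rightarrow> nat \<Rightarrow> ereal \<Rightarrow> (nat \<Rightarrow> real \<Rightarrow> real) \<Rightarrow> bool" where
  "sol_a p N T a \<longleftrightarrow>
     (\<forall>t\<in>tdom T. \<forall>i\<le>N. a i t \<noteq> 0 \<and>
        ((\<lambda>s. a i s) has_real_derivative
           a i t * ((\<Prod>j=1..p. zext N (\<lambda>k. a k t) (int i + int j))
                  - (\<Prod>j=1..p. zext N (\<lambda>k. a k t) (int i - int j))))
        (at t within tdom T))"

definition sol_b :: "nat \<Rightarrow> nat \<Rightarrow> ereal \<Rightarrow> (nat \<Rightarrow> real \<Rightarrow> real) \<Rightarrow> bool" where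
  "sol_b p N T b \<longleftrightarrow>
     (\<forall>t\<in>tdom T. \<forall>i\<le>N. b i t \<noteq> 0 \<and>
        ((\<lambda>s. b i s) has_real_derivative
           b i t * ((\<Sum>j=1..p. zext N (\<lambda>k. b k t) (int i + int j))
                  - (\<Sum>j=1..p. zext N (\<lambda>k. b k t) (int i - int j))))
        (at t within tdom T))"

definition L1 :: "nat \<Rightarrow> nat \<Rightarrow> (nat \<Rightarrow> real) \<Rightarrow> real mat" where
  "L1 p N a = mat (N+2) (N+2) (\<lambda>(i,j).
      (if j = i + p \<and> i \<le> N + 1 - p then 1 else 0)
    + (if i = j + 1 \<and> j \<le> N then a j else 0))"

definition L2 :: "nat \<Rightarrow> nat \<Rightarrow> (nat \<Rightarrow> real) \<Rightarrow> real mat" where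
  "L2 p N b = mat (N+p+1) (N+p+1) (\<lambda>(i,j).
      (if j = i + 1 \<and> i + 1 \<le> N + p then 1 else 0)
    + (if i = j + p \<and> j \<le> N then b j else 0))"

definition S :: "nat \<Rightarrow> nat \<Rightarrow> (nat \<Rightarrow> real) \<Rightarrow> nat \<Rightarrow> nat \<Rightarrow> real" where
  "S p N a l k = ((L1 p N a) ^\<^sub>m k) $$ (l - 1, 0)"

definition alpha :: "nat \<Rightarrow> nat \<Rightarrow> (nat \<Rightarrow> real) \<Rightarrow> nat \<Rightarrow> nat \<Rightarrow> real" where
  "alpha p N a i j = S p N a (i mod p + 1) (i div p + j)"

definition St :: "nat \<Rightarrow> nat \<Rightarrow> (nat \<Rightarrow> real) \<Rightarrow> nat \<Rightarrow> nat \<Rightarrow> real" where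
  "St p N b l k = ((L2 p N b) ^\<^sub>m k) $$ (0, l - 1)"

end

theory Submission
  imports Defs "HOL-Analysis.Analysis"
begin

(*
  Both systems are Lax equations, L1' = L1 B1 - B1 L1 and L2' = L2 B2 - B2 L2 for explicit
  band matrices B1, B2, so every power satisfies (L^k)' = L^k B - B L^k.  The columns
  u_j = L1^j e_0 and the rows r_i = e_(i mod p)^T L1^(i div p) are triangular families with
  nonzero diagonal and alpha_(i,j) = r_i . u_j; likewise tilde S is the pairing of the rows
  e_0^T L2^k with the columns L2^(j div p) e_(j mod p).  Pairing against a triangular family is
  injective, so each scalar recurrence with coefficients c_v is equivalent to the vector
  recurrence w_n = sum_v c_v w_(n-1-v) for the other family.  That family evolves under one
  linear flow w' = M w, hence differentiating the recurrence leaves sum_v c_v' w_(n-1-v) = 0,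
  and linear independence gives c_v' = 0.
*)

section \<open>Triangular families and linear flows\<close>

lemma lower_triangular_kernel:
  fixes y :: "nat \<Rightarrow> nat \<Rightarrow> 'a::ring_no_zero_divisors"
  assumes kernel: "\<And>i. i < n \<Longrightarrow> (\<Sum>m<n. y i m * z m) = 0"
    and diag: "\<And>i. i < n \<Longrightarrow> y i i \<noteq> 0"
    and lower: "\<And>i m. i < m \<Longrightarrow> m < n \<Longrightarrow> y i m = 0"
  shows "i < n \<Longrightarrow> z i = 0"
proof (induction i rule: less_induct)
  case (less i)
  have "(\<Sum>m<n. y i m * z m) = (\<Sum>m\<in>{i}. y i m * z m)"
    by (rule sum.mono_neutral_right) (use less lower in \<open>auto simp: neq_iff\<close>)
  then have "y i i * z i = 0"
    using kernel[OF less.prems] by simp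
  then show ?case
    using diag[OF less.prems] by simp
qed

lemma lower_triangular_pairing_cancel:
  fixes y :: "nat \<Rightarrow> nat \<Rightarrow> 'a::ring_no_zero_divisors"
  assumes pairing: "\<And>i. i < n \<Longrightarrow> (\<Sum>m<n. y i m * u m) = (\<Sum>m<n. y i m * v m)"
    and diag: "\<And>i. i < n \<Longrightarrow> y i i \<noteq> 0"
    and lower: "\<And>i m. i < m \<Longrightarrow> m < n \<Longrightarrow> y i m = 0"
  shows "m < n \<Longrightarrow> u m = v m"
  using lower_triangular_kernel[of n y "\<lambda>m. u m - v m", OF _ diag lower] pairing
  by (simp add: right_diff_distrib sum_subtractf)

lemma lower_triangular_solution_differentiable:
  fixes y :: "nat \<Rightarrow> nat \<Rightarrow> real \<Rightarrow> real" and z b :: "nat \<Rightarrow> real \<Rightarrow> real"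
  assumes t: "t \<in> J"
    and system: "\<And>s i. s \<in> J \<Longrightarrow> i < n \<Longrightarrow> (\<Sum>m<n. y i m s * z m s) = b i s"
    and diag: "\<And>s i. s \<in> J \<Longrightarrow> i < n \<Longrightarrow> y i i s \<noteq> 0"
    and lower: "\<And>s i m. s \<in> J \<Longrightarrow> i < m \<Longrightarrow> m < n \<Longrightarrow> y i m s = 0"
    and dy: "\<And>i m. i < n \<Longrightarrow> m < n \<Longrightarrow> y i m differentiable (at t within J)"
    and db: "\<And>i. i < n \<Longrightarrow> b i differentiable (at t within J)"
  shows "i < n \<Longrightarrow> z i differentiable (at t within J)"
proof (induction i rule: less_induct)
  case (less i)
  have solve: "z i s = (b i s - (\<Sum>m<i. y i m s * z m s)) / y i i s" if s: "s \<in> J" for s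
  proof -
    have "(\<Sum>m<n. y i m s * z m s) = (\<Sum>m<Suc i. y i m s * z m s)"
      by (rule sum.mono_neutral_right) (use s lower less.prems in auto)
    then show ?thesis
      using system[OF s less.prems] diag[OF s less.prems] by (simp add: field_simps)
  qed
  have "(\<lambda>s. (b i s - (\<Sum>m<i. y i m s * z m s)) / y i i s) differentiable (at t within J)"
    using less dy db diag[OF t] by (auto intro!: derivative_intros)
  then show ?case
    by (rule differentiable_transform_within[where d=1]) (use t solve in auto)
qed

locale triangular_flow =
  fixes J :: "real set" and n :: nat and w :: "nat \<Rightarrow> real \<Rightarrow> nat \<Rightarrow> real"
    and M :: "real \<Rightarrow> nat \<Rightarrow> nat \<Rightarrow> real"
  assumes convex: "convex J"
    and nontrivial: "\<And>t. t \<in> J \<Longrightarrow> at t within J \<noteq> bot"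
    and flow: "\<And>t i k. t \<in> J \<Longrightarrow> i \<le> n \<Longrightarrow> k < n \<Longrightarrow>
      ((\<lambda>s. w i s k) has_real_derivative (\<Sum>m<n. M t k m * w i t m)) (at t within J)"
    and diag: "\<And>t i. t \<in> J \<Longrightarrow> i < n \<Longrightarrow> w i t i \<noteq> 0"
    and lower: "\<And>t i k. t \<in> J \<Longrightarrow> i < k \<Longrightarrow> k < n \<Longrightarrow> w i t k = 0"
begin

context
  fixes c :: "nat \<Rightarrow> real \<Rightarrow> real"
  assumes recurrence: "\<And>t k. t \<in> J \<Longrightarrow> k < n \<Longrightarrow> w n t k = (\<Sum>v<n. c v t * w (n - v - 1) t k)"
begin

(* Read with both indices reversed, the recurrence is a lower triangular system for the coefficients. *)
lemma recurrence_coeff_differentiable: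
  assumes "t \<in> J" "v < n"
  shows "c v differentiable (at t within J)"
proof (rule lower_triangular_solution_differentiable[where y="\<lambda>k v s. w (n - v - 1) s (n - k - 1)"
      and b="\<lambda>k s. w n s (n - k - 1)"])
  show "(\<Sum>v<n. w (n - v - 1) s (n - k - 1) * c v s) = w n s (n - k - 1)" if "s \<in> J" "k < n" for s k
    using recurrence[of s "n - k - 1"] that by (simp add: mult.commute)
  show "(\<lambda>s. w (n - v - 1) s (n - k - 1)) differentiable (at t within J)" if "k < n" "v < n" for k v
    using flow[OF \<open>t \<in> J\<close>, of "n - v - 1" "n - k - 1"] that real_differentiable_def by force
  show "(\<lambda>s. w n s (n - k - 1)) differentiable (at t within J)" if "k < n" for k
    using flow[OF \<open>t \<in> J\<close>, of n "n - k - 1"] that real_differentiable_def by force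
qed (use assms diag lower in auto)

lemma recurrence_coeff_derivative_zero:
  assumes t: "t \<in> J" and D: "\<And>v. v < n \<Longrightarrow> (c v has_real_derivative D v) (at t within J)"
  shows "v < n \<Longrightarrow> D v = 0"
proof (rule lower_triangular_kernel[where y="\<lambda>k v. w (n - v - 1) t (n - k - 1)"])
  fix k assume k: "k < n"
  define k' where "k' = n - k - 1"
  have k': "k' < n" using k unfolding k'_def by simp
  have "((\<lambda>s. \<Sum>v<n. c v s * w (n - v - 1) s k') has_real_derivative
      (\<Sum>v<n. D v * w (n - v - 1) t k' + (\<Sum>m<n. M t k' m * w (n - v - 1) t m) * c v t)) (at t within J)"
    by (intro DERIV_sum DERIV_mult D flow t k') auto
  moreover have "((\<lambda>s. \<Sum>v<n. c v s * w (n - v - 1) s k') has_real_derivative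
      (\<Sum>m<n. M t k' m * w n t m)) (at t within J)"
    by (rule has_field_derivative_transform_within[OF flow[OF t order.refl k'], where d=1])
      (use t recurrence k' in auto)
  ultimately have "(\<Sum>v<n. D v * w (n - v - 1) t k' + (\<Sum>m<n. M t k' m * w (n - v - 1) t m) * c v t)
      = (\<Sum>m<n. M t k' m * w n t m)"
    using vector_derivative_unique_within[OF nontrivial[OF t]]
    by (simp add: has_real_derivative_iff_has_vector_derivative)
  also have "\<dots> = (\<Sum>m<n. \<Sum>v<n. M t k' m * w (n - v - 1) t m * c v t)"
    by (intro sum.cong refl) (simp add: recurrence[OF t] sum_distrib_left mult_ac)
  also have "\<dots> = (\<Sum>v<n. (\<Sum>m<n. M t k' m * w (n - v - 1) t m) * c v t)"
    by (subst sum.swap) (simp add: sum_distrib_right)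
  finally show "(\<Sum>v<n. w (n - v - 1) t (n - k - 1) * D v) = 0"
    by (simp add: sum.distrib k'_def mult.commute)
qed (use t diag lower in auto)

lemma recurrence_coeff_constant:
  assumes "v < n" "t \<in> J" "t' \<in> J"
  shows "c v t = c v t'"
proof -
  have "\<exists>D. (c v has_real_derivative D) (at t within J)" if "v < n" "t \<in> J" for v t
    using recurrence_coeff_differentiable[OF that(2,1)] by (simp add: real_differentiable_def)
  then obtain D where D: "\<And>v t. v < n \<Longrightarrow> t \<in> J \<Longrightarrow> (c v has_real_derivative D v t) (at t within J)"
    by metis
  have "\<exists>c0. \<forall>t\<in>J. c v t = c0"
  proof (rule has_field_derivative_zero_constant[OF convex])
    fix t assume "t \<in> J"
    then show "(c v has_real_derivative 0) (at t within J)"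
      using D[OF \<open>v < n\<close> \<open>t \<in> J\<close>] recurrence_coeff_derivative_zero[OF \<open>t \<in> J\<close> D \<open>v < n\<close>]
      by simp
  qed
  then show ?thesis using assms by auto
qed

end

lemma pairing_recurrence_coeff_constant:
  fixes y :: "real \<Rightarrow> nat \<Rightarrow> nat \<Rightarrow> real" and c :: "nat \<Rightarrow> real \<Rightarrow> real"
  assumes y_diag: "\<And>t i. t \<in> J \<Longrightarrow> i < n \<Longrightarrow> y t i i \<noteq> 0"
    and y_lower: "\<And>t i m. t \<in> J \<Longrightarrow> i < m \<Longrightarrow> m < n \<Longrightarrow> y t i m = 0"
    and pairing: "\<And>t i. t \<in> J \<Longrightarrow> i < n \<Longrightarrow>
      (\<Sum>m<n. y t i m * w n t m) = (\<Sum>v<n. c v t * (\<Sum>m<n. y t i m * w (n - v - 1) t m))"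
    and "v < n" "t \<in> J" "t' \<in> J"
  shows "c v t = c v t'"
proof (rule recurrence_coeff_constant[of c])
  fix t k assume t: "t \<in> J" and k: "k < n"
  show "w n t k = (\<Sum>v<n. c v t * w (n - v - 1) t k)"
  proof (rule lower_triangular_pairing_cancel[of n "y t", OF _ y_diag[OF t] y_lower[OF t] k])
    fix i assume "i < n"
    have "(\<Sum>m<n. y t i m * (\<Sum>v<n. c v t * w (n - v - 1) t m))
        = (\<Sum>m<n. \<Sum>v<n. c v t * (y t i m * w (n - v - 1) t m))"
      by (simp add: sum_distrib_left mult_ac)
    also have "\<dots> = (\<Sum>v<n. c v t * (\<Sum>m<n. y t i m * w (n - v - 1) t m))"
      by (subst sum.swap) (simp add: sum_distrib_left)
    finally show "(\<Sum>m<n. y t i m * w n t m) = (\<Sum>m<n. y t i m * (\<Sum>v<n. c v t * w (n - v - 1) t m))"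
      using pairing[OF t \<open>i < n\<close>] by simp
  qed
qed (use assms in auto)

end

lemma index_mult_mat_sum:
  fixes A B :: "'a::semiring_0 mat"
  assumes "A \<in> carrier_mat nr n" "B \<in> carrier_mat n nc" "i < nr" "j < nc"
  shows "(A * B) $$ (i,j) = (\<Sum>m<n. A $$ (i,m) * B $$ (m,j))"
  using assms by (auto simp: scalar_prod_def atLeast0LessThan intro!: sum.cong)

lemma pow_mat_add:
  fixes A :: "'a::semiring_1 mat"
  assumes A: "A \<in> carrier_mat n n"
  shows "A ^\<^sub>m (k + l) = A ^\<^sub>m k * A ^\<^sub>m l"
proof (induction l)
  case 0
  then show ?case using A by simp
next
  case (Suc l)
  then show ?case using A by (simp add: assoc_mult_mat[of _ n n _ n _ n])
qed

lemma pow_mat_commute: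
  fixes A :: "'a::semiring_1 mat"
  assumes "A \<in> carrier_mat n n"
  shows "A ^\<^sub>m k * A ^\<^sub>m l = A ^\<^sub>m l * A ^\<^sub>m k"
  using pow_mat_add[OF assms, of k l] pow_mat_add[OF assms, of l k] by (simp add: add.commute)

lemma pow_mat_Suc_left:
  fixes A :: "'a::semiring_1 mat"
  assumes "A \<in> carrier_mat n n"
  shows "A ^\<^sub>m Suc k = A * A ^\<^sub>m k"
  using pow_mat_add[OF assms, of 1 k] assms by simp

definition has_mat_derivative :: "nat \<Rightarrow> (real \<Rightarrow> real mat) \<Rightarrow> real mat \<Rightarrow> real filter \<Rightarrow> bool" where
  "has_mat_derivative n A A' F \<longleftrightarrow>
     (\<forall>i<n. \<forall>j<n. ((\<lambda>s. A s $$ (i,j)) has_real_derivative A' $$ (i,j)) F)"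

lemma has_mat_derivative_mult:
  assumes A: "\<And>s. A s \<in> carrier_mat n n" and B: "\<And>s. B s \<in> carrier_mat n n"
    and A': "A' \<in> carrier_mat n n" and B': "B' \<in> carrier_mat n n"
    and dA: "has_mat_derivative n A A' (at t within J)"
    and dB: "has_mat_derivative n B B' (at t within J)"
  shows "has_mat_derivative n (\<lambda>s. A s * B s) (A' * B t + A t * B') (at t within J)"
  unfolding has_mat_derivative_def
proof (intro allI impI)
  fix i j assume ij: "i < n" "j < n"
  have "((\<lambda>s. \<Sum>m<n. A s $$ (i,m) * B s $$ (m,j)) has_real_derivative
      (\<Sum>m<n. A' $$ (i,m) * B t $$ (m,j) + B' $$ (m,j) * A t $$ (i,m))) (at t within J)"
    using dA dB ij unfolding has_mat_derivative_def by (intro DERIV_sum DERIV_mult) auto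
  moreover have "(\<lambda>s. (A s * B s) $$ (i,j)) = (\<lambda>s. \<Sum>m<n. A s $$ (i,m) * B s $$ (m,j))"
    using index_mult_mat_sum[OF A B ij] by simp
  moreover have "(A' * B t + A t * B') $$ (i,j)
      = (\<Sum>m<n. A' $$ (i,m) * B t $$ (m,j) + B' $$ (m,j) * A t $$ (i,m))"
    using ij A[of t] B[of t] A' B'
    by (simp add: index_mult_mat_sum[OF A' B ij] index_mult_mat_sum[OF A B' ij] sum.distrib mult.commute)
  ultimately show "((\<lambda>s. (A s * B s) $$ (i,j)) has_real_derivative (A' * B t + A t * B') $$ (i,j))
      (at t within J)"
    by simp
qed

lemma commutator_pow_step:
  fixes P V A :: "'a::comm_ring mat"
  assumes "P \<in> carrier_mat n n" "V \<in> carrier_mat n n" "A \<in> carrier_mat n n"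
  shows "(P * V - V * P) * A + P * (A * V - V * A) = (P * A) * V - V * (P * A)"
proof -
  have "(P * V - V * P) * A + P * (A * V - V * A)
      = (P * (V * A) - V * (P * A)) + (P * (A * V) - P * (V * A))"
    using assms by (simp add: minus_mult_distrib_mat[of _ n n _ _ n] mult_minus_distrib_mat[of _ n n _ n]
        assoc_mult_mat[of _ n n _ n _ n])
  also have "\<dots> = (P * A) * V - V * (P * A)"
    using assms by (intro eq_matI) (simp_all add: assoc_mult_mat[of _ n n _ n _ n])
  finally show ?thesis .
qed

lemma has_mat_derivative_pow_commutator:
  assumes A: "\<And>s. A s \<in> carrier_mat n n" and V: "V \<in> carrier_mat n n"
    and dA: "has_mat_derivative n A (A t * V - V * A t) (at t within J)"
  shows "has_mat_derivative n (\<lambda>s. A s ^\<^sub>m k) (A t ^\<^sub>m k * V - V * A t ^\<^sub>m k) (at t within J)"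
proof (induction k)
  case 0
  have "A s ^\<^sub>m 0 = 1\<^sub>m n" for s
    using A[of s] by simp
  then show ?case
    using V A[of t] by (simp add: has_mat_derivative_def)
next
  case (Suc k)
  have "has_mat_derivative n (\<lambda>s. A s ^\<^sub>m k * A s)
      ((A t ^\<^sub>m k * V - V * A t ^\<^sub>m k) * A t + A t ^\<^sub>m k * (A t * V - V * A t)) (at t within J)"
    using A V by (intro has_mat_derivative_mult Suc dA) (auto intro!: minus_carrier_mat)
  then show ?case
    using A[of t] V by (simp add: commutator_pow_step[of _ n])
qed

lemma commutator_col_eq:
  fixes A B Y :: "'a::comm_ring mat"
  assumes A: "A \<in> carrier_mat n n" and B: "B \<in> carrier_mat n n" and Y: "Y \<in> carrier_mat n n"
    and comm: "Y * A = A * Y" and col: "\<And>m. m < n \<Longrightarrow> B $$ (m,j) = Y $$ (m,j)"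
    and kj: "k < n" "j < n"
  shows "(A * B - B * A) $$ (k,j) = ((Y - B) * A) $$ (k,j)"
proof -
  have "(A * B) $$ (k,j) = (Y * A) $$ (k,j)"
    unfolding comm using kj col by (simp add: index_mult_mat_sum[OF A B] index_mult_mat_sum[OF A Y])
  then show ?thesis
    using A B Y kj by (simp add: minus_mult_distrib_mat[of _ n n _ _ n])
qed

lemma commutator_row_eq:
  fixes A B Y :: "'a::comm_ring mat"
  assumes A: "A \<in> carrier_mat n n" and B: "B \<in> carrier_mat n n" and Y: "Y \<in> carrier_mat n n"
    and comm: "Y * A = A * Y" and row: "\<And>m. m < n \<Longrightarrow> B $$ (l,m) = Y $$ (l,m)"
    and lm: "l < n" "m < n"
  shows "(A * B - B * A) $$ (l,m) = (A * (B - Y)) $$ (l,m)"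
proof -
  have "(B * A) $$ (l,m) = (A * Y) $$ (l,m)"
    unfolding comm[symmetric] using lm row by (simp add: index_mult_mat_sum[OF B A] index_mult_mat_sum[OF Y A])
  then show ?thesis
    using A B Y lm by (simp add: mult_minus_distrib_mat[of _ n n _ n])
qed

lemma commute_diff_smult_one:
  fixes X P :: "'a::comm_ring_1 mat"
  assumes X: "X \<in> carrier_mat n n" and P: "P \<in> carrier_mat n n" and comm: "X * P = P * X"
  shows "(X - c \<cdot>\<^sub>m 1\<^sub>m n) * P = P * (X - c \<cdot>\<^sub>m 1\<^sub>m n)"
  using assms by (simp add: minus_mult_distrib_mat[of _ n n _ _ n] mult_minus_distrib_mat[of _ n n _ n]
      mult_smult_assoc_mat[of _ n n _ n] mult_smult_distrib[of _ n n _ n])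

definition two_band_mat :: "nat \<Rightarrow> nat \<Rightarrow> nat \<Rightarrow> (nat \<Rightarrow> 'a::semiring_1) \<Rightarrow> 'a mat" where
  "two_band_mat n q r c =
     Matrix.mat n n (\<lambda>(i,j). (if j = i + q then 1 else 0) + (if i = j + r then c j else 0))"

lemma two_band_mat_carrier [simp]: "two_band_mat n q r c \<in> carrier_mat n n"
  by (simp add: two_band_mat_def)

lemma two_band_mult_left:
  assumes X: "X \<in> carrier_mat n n" and ij: "i < n" "j < n"
  shows "(two_band_mat n q r c * X) $$ (i,j)
    = (if i + q < n then X $$ (i + q, j) else 0) + (if r \<le> i then c (i - r) * X $$ (i - r, j) else 0)"
proof -
  have "(two_band_mat n q r c * X) $$ (i,j) = (\<Sum>m<n. two_band_mat n q r c $$ (i,m) * X $$ (m,j))"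
    by (rule index_mult_mat_sum[OF two_band_mat_carrier X ij])
  also have "\<dots> = (\<Sum>m<n. (if m = i + q then X $$ (m,j) else 0)
      + (if m = i - r \<and> r \<le> i then c m * X $$ (m,j) else 0))"
    using ij by (intro sum.cong) (auto simp: two_band_mat_def distrib_right)
  finally show ?thesis
    using ij by (cases "r \<le> i") (simp_all add: sum.distrib sum.delta less_imp_diff_less)
qed

lemma two_band_mult_right:
  assumes X: "X \<in> carrier_mat n n" and ij: "i < n" "j < n"
  shows "(X * two_band_mat n q r c) $$ (i,j)
    = (if q \<le> j then X $$ (i, j - q) else 0) + (if j + r < n then X $$ (i, j + r) * c j else 0)"
proof -
  have "(X * two_band_mat n q r c) $$ (i,j) = (\<Sum>m<n. X $$ (i,m) * two_band_mat n q r c $$ (m,j))"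
    by (rule index_mult_mat_sum[OF X two_band_mat_carrier ij])
  also have "\<dots> = (\<Sum>m<n. (if m = j - q \<and> q \<le> j then X $$ (i,m) else 0)
      + (if m = j + r then X $$ (i,m) * c j else 0))"
    using ij by (intro sum.cong) (auto simp: two_band_mat_def distrib_left)
  finally show ?thesis
    using ij by (cases "q \<le> j") (simp_all add: sum.distrib sum.delta less_imp_diff_less)
qed

lemma L1_eq_two_band: "L1 p N a = two_band_mat (N+2) p 1 a"
  by (rule eq_matI) (auto simp: L1_def two_band_mat_def)

lemma L2_eq_two_band: "L2 p N b = two_band_mat (N+p+1) 1 p b"
  by (rule eq_matI) (auto simp: L2_def two_band_mat_def)

lemma tdom_convex: "convex (tdom T)"
proof -
  have "x \<in> tdom T" if "a \<in> tdom T" "b \<in> tdom T" "a \<le> x" "x \<le> b" for a b x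
    using that unfolding tdom_def by (auto intro: le_less_trans[of _ "ereal b"])
  then show ?thesis
    unfolding is_interval_convex_1[symmetric] is_interval_1 by blast
qed

lemma tdom_nontrivial:
  assumes t: "t \<in> tdom T"
  shows "at t within tdom T \<noteq> bot"
proof -
  obtain z where z: "ereal t < ereal z" "ereal z < T"
    using t ereal_dense2 unfolding tdom_def by blast
  have "{t..z} \<subseteq> tdom T"
    using t z(2) unfolding tdom_def by (auto intro: le_less_trans[of _ "ereal z"])
  moreover have "t islimpt {t..z}"
    using z(1) by simp
  ultimately show ?thesis
    using islimpt_subset trivial_limit_within by blast
qed

lemma zero_in_tdom: "0 < T \<Longrightarrow> 0 \<in> tdom T"
  by (simp add: tdom_def zero_ereal_def)

lemma zext_int [simp]: "zext N x (int i) = (if i \<le> N then x i else 0)"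
  by (simp add: zext_def)

context comm_monoid_set
begin

lemma int_window_first:
  "F (\<lambda>s. g (x + int s)) {0..p} = g x \<^bold>* F (\<lambda>k. g (x + int k)) {1..p}"
  using atLeast_Suc_atMost[of 0 p "\<lambda>s. g (x + int s)"] by simp

lemma int_window_last:
  "F (\<lambda>s. g (x - int p + int s)) {0..p} = g x \<^bold>* F (\<lambda>k. g (x - int k)) {1..p}"
proof -
  have "F (\<lambda>s. g (x - int p + int s)) {0..p} = F (\<lambda>k. g (x - int k)) {0..p}"
    by (subst atLeastAtMost_rev) (auto intro!: cong simp: of_nat_diff)
  then show ?thesis
    using atLeast_Suc_atMost[of 0 p "\<lambda>k. g (x - int k)"] by simp
qed

lemma int_window_shift:
  "F (\<lambda>s. g (x + int s)) {0..p} \<^bold>* g (x + int p + 1) = g x \<^bold>* F (\<lambda>s. g (x + 1 + int s)) {0..p}"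
  using atLeast0_atMost_Suc[of "\<lambda>s. g (x + int s)" p] atLeast0_atMost_Suc_shift[of "\<lambda>s. g (x + int s)" p]
  by (simp add: comp_def add_ac)

end

section \<open>The product system\<close>

definition consec_prod :: "nat \<Rightarrow> nat \<Rightarrow> (nat \<Rightarrow> real) \<Rightarrow> int \<Rightarrow> real" where
  "consec_prod p N a x = (\<Prod>s=0..p. zext N a (x + int s))"

lemma consec_prod_eq_0:
  assumes "x < 0 \<or> int N < x + int p"
  shows "consec_prod p N a x = 0"
proof -
  have "\<exists>s\<in>{0..p}. zext N a (x + int s) = 0"
    using assms by (auto simp: zext_def intro: bexI[of _ 0] bexI[of _ p])
  then show ?thesis
    unfolding consec_prod_def by (simp add: prod_zero)
qed

definition B1 :: "nat \<Rightarrow> nat \<Rightarrow> (nat \<Rightarrow> real) \<Rightarrow> real mat" where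
  "B1 p N a = Matrix.mat (N+2) (N+2) (\<lambda>(i,j). if i = j + p + 1 then consec_prod p N a (int j) else 0)"

lemma B1_carrier [simp]: "B1 p N a \<in> carrier_mat (N+2) (N+2)"
  by (simp add: B1_def)

lemma L1_carrier [simp]: "L1 p N a \<in> carrier_mat (N+2) (N+2)"
  by (simp add: L1_def)

lemma dim_B1 [simp]: "dim_row (B1 p N a) = N+2" "dim_col (B1 p N a) = N+2"
  by (simp_all add: B1_def)

lemma dim_L1 [simp]: "dim_row (L1 p N a) = N+2" "dim_col (L1 p N a) = N+2"
  by (simp_all add: L1_def)

lemma B1_index:
  "i < N+2 \<Longrightarrow> j < N+2 \<Longrightarrow> B1 p N a $$ (i,j) = (if i = j + p + 1 then consec_prod p N a (int j) else 0)"
  by (simp add: B1_def)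

lemma L1_mult_left:
  "X \<in> carrier_mat (N+2) (N+2) \<Longrightarrow> i < N+2 \<Longrightarrow> j < N+2 \<Longrightarrow> (L1 p N a * X) $$ (i,j)
    = (if i + p < N+2 then X $$ (i + p, j) else 0) + (if 1 \<le> i then a (i - 1) * X $$ (i - 1, j) else 0)"
  unfolding L1_eq_two_band by (rule two_band_mult_left)

lemma L1_mult_right:
  "X \<in> carrier_mat (N+2) (N+2) \<Longrightarrow> i < N+2 \<Longrightarrow> j < N+2 \<Longrightarrow> (X * L1 p N a) $$ (i,j)
    = (if p \<le> j then X $$ (i, j - p) else 0) + (if j + 1 < N+2 then X $$ (i, j + 1) * a j else 0)"
  unfolding L1_eq_two_band by (rule two_band_mult_right)

lemma L1_B1_commutator:
  assumes p: "1 \<le> p" and ij: "i < N+2" "j < N+2"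
  shows "(L1 p N a * B1 p N a - B1 p N a * L1 p N a) $$ (i,j)
    = (if i = j + 1 then a j * ((\<Prod>k=1..p. zext N a (int j + int k)) - (\<Prod>k=1..p. zext N a (int j - int k)))
       else 0)"
proof -
  let ?Q = "consec_prod p N a"
  have LB: "(L1 p N a * B1 p N a) $$ (i,j)
      = (if i = j + 1 then ?Q (int j) else 0) + (if i = j + p + 2 then a (j + p + 1) * ?Q (int j) else 0)"
    using L1_mult_left[OF B1_carrier ij] ij consec_prod_eq_0[of "int j" N p a]
    by (auto simp: B1_index)
  have BL: "(B1 p N a * L1 p N a) $$ (i,j)
      = (if i = j + 1 then ?Q (int j - int p) else 0) + (if i = j + p + 2 then ?Q (int (j + 1)) * a j else 0)"
    using L1_mult_right[OF B1_carrier ij] ij p consec_prod_eq_0[of "int j - int p" N p a]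
    by (auto simp: B1_index of_nat_diff)
  have "?Q (int j) - ?Q (int j - int p)
      = a j * ((\<Prod>k=1..p. zext N a (int j + int k)) - (\<Prod>k=1..p. zext N a (int j - int k)))"
    if "j \<le> N"
    using that prod.int_window_first[of "zext N a" "int j" p] prod.int_window_last[of "zext N a" "int j" p]
    by (simp add: consec_prod_def right_diff_distrib)
  moreover have "a (j + p + 1) * ?Q (int j) = ?Q (int (j + 1)) * a j" if "j + p + 1 \<le> N"
    using that prod.int_window_shift[of "zext N a" "int j" p] zext_int[of N a "j + p + 1"]
    by (simp add: consec_prod_def mult_ac add_ac)
  ultimately show ?thesis
    using ij p by (simp add: LB BL)
qed

lemma L1_has_mat_derivative:
  assumes p: "1 \<le> p" and sol: "sol_a p N T a" and t: "t \<in> tdom T"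
  shows "has_mat_derivative (N+2) (\<lambda>s. L1 p N (\<lambda>k. a k s))
    (L1 p N (\<lambda>k. a k t) * B1 p N (\<lambda>k. a k t) - B1 p N (\<lambda>k. a k t) * L1 p N (\<lambda>k. a k t))
    (at t within tdom T)"
  unfolding has_mat_derivative_def
proof (intro allI impI)
  fix i j assume ij: "i < N+2" "j < N+2"
  have entry: "(\<lambda>s. L1 p N (\<lambda>k. a k s) $$ (i,j))
      = (\<lambda>s. (if j = i + p then 1 else 0) + (if i = j + 1 then a j s else 0))"
    using ij by (auto simp: L1_def)
  show "((\<lambda>s. L1 p N (\<lambda>k. a k s) $$ (i,j)) has_real_derivative
      (L1 p N (\<lambda>k. a k t) * B1 p N (\<lambda>k. a k t) - B1 p N (\<lambda>k. a k t) * L1 p N (\<lambda>k. a k t)) $$ (i,j))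
      (at t within tdom T)"
  proof (cases "i = j + 1")
    case True
    then have "j \<le> N" using ij by simp
    then have "((\<lambda>s. a j s) has_real_derivative a j t * ((\<Prod>k=1..p. zext N (\<lambda>k. a k t) (int j + int k))
        - (\<Prod>k=1..p. zext N (\<lambda>k. a k t) (int j - int k)))) (at t within tdom T)"
      using sol t unfolding sol_a_def by blast
    then show ?thesis
      using True unfolding entry L1_B1_commutator[OF p ij] by simp
  next
    case False
    then show ?thesis unfolding entry L1_B1_commutator[OF p ij] by simp
  qed
qed

lemma sol_a_nonzero: "sol_a p N T a \<Longrightarrow> t \<in> tdom T \<Longrightarrow> i \<le> N \<Longrightarrow> a i t \<noteq> 0"
  unfolding sol_a_def by blast

definition col_a :: "nat \<Rightarrow> nat \<Rightarrow> (nat \<Rightarrow> real) \<Rightarrow> nat \<Rightarrow> nat \<Rightarrow> real" where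
  "col_a p N a j k = (L1 p N a ^\<^sub>m j) $$ (k, 0)"

definition row_a :: "nat \<Rightarrow> nat \<Rightarrow> (nat \<Rightarrow> real) \<Rightarrow> nat \<Rightarrow> nat \<Rightarrow> real" where
  "row_a p N a i m = (L1 p N a ^\<^sub>m (i div p)) $$ (i mod p, m)"

lemma col_a_Suc:
  "k < N+2 \<Longrightarrow> col_a p N a (Suc j) k
    = (if k + p < N+2 then col_a p N a j (k + p) else 0) + (if 1 \<le> k then a (k - 1) * col_a p N a j (k - 1) else 0)"
  unfolding col_a_def pow_mat_Suc_left[OF L1_carrier] by (rule L1_mult_left) auto

lemma col_a_lower: "j < k \<Longrightarrow> k < N+2 \<Longrightarrow> col_a p N a j k = 0"
proof (induction j arbitrary: k)
  case 0
  then show ?case by (simp add: col_a_def)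
next
  case (Suc j)
  then show ?case by (simp add: col_a_Suc)
qed

lemma col_a_diag: "j < N+2 \<Longrightarrow> col_a p N a j j = (\<Prod>s<j. a s)"
proof (induction j)
  case 0
  then show ?case by (simp add: col_a_def)
next
  case (Suc j)
  then show ?case by (simp add: col_a_Suc col_a_lower)
qed

lemma col_a_upto_p: "j \<le> p \<Longrightarrow> k < N+2 \<Longrightarrow> col_a p N a j k = (if k = j then \<Prod>s<j. a s else 0)"
proof (induction j arbitrary: k)
  case 0
  then show ?case by (simp add: col_a_def)
next
  case (Suc j)
  then show ?case by (auto simp: col_a_Suc)
qed

lemma B1_col_0:
  assumes pN: "p \<le> N" and k: "k < N+2"
  shows "B1 p N a $$ (k, 0) = (L1 p N a ^\<^sub>m Suc p - (\<Prod>s<p. a s) \<cdot>\<^sub>m 1\<^sub>m (N+2)) $$ (k, 0)"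
proof -
  have "consec_prod p N a 0 = (\<Prod>s<Suc p. a s)"
    using pN unfolding consec_prod_def lessThan_Suc_atMost atLeast0AtMost[symmetric]
    by (intro prod.cong) auto
  moreover have "col_a p N a (Suc p) k
      = (if k = 0 then \<Prod>s<p. a s else 0) + (if k = p + 1 then \<Prod>s<Suc p. a s else 0)"
    using pN k by (auto simp: col_a_Suc col_a_upto_p)
  ultimately show ?thesis
    using k by (simp add: B1_index col_a_def)
qed

lemma row_a_add_p:
  assumes p: "1 \<le> p" "p \<le> N" and m: "m < N+2"
  shows "row_a p N a (i + p) m
    = (if p \<le> m then row_a p N a i (m - p) else 0) + (if m + 1 < N+2 then row_a p N a i (m + 1) * a m else 0)"
proof -
  have d: "(i + p) div p = Suc (i div p)" "(i + p) mod p = i mod p"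
    using p by auto
  have l: "i mod p < N+2"
    using p by (auto intro: less_le_trans[of _ p])
  show ?thesis
    unfolding row_a_def d pow_mat.simps(2) L1_mult_right[OF pow_carrier_mat[OF L1_carrier] l m] ..
qed

lemma row_a_below_p:
  "i < p \<Longrightarrow> p \<le> N \<Longrightarrow> m < N+2 \<Longrightarrow> row_a p N a i m = (if m = i then 1 else 0)"
  by (simp add: row_a_def)

lemma row_a_lower:
  assumes p: "1 \<le> p" "p \<le> N"
  shows "i < m \<Longrightarrow> m < N+2 \<Longrightarrow> row_a p N a i m = 0"
proof (induction i arbitrary: m rule: less_induct)
  case (less i)
  show ?case
  proof (cases "i < p")
    case True
    then show ?thesis using less.prems p by (simp add: row_a_below_p)
  next
    case False
    then obtain i' where "i = i' + p" by (metis add.commute le_add_diff_inverse not_less)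
    then show ?thesis
      using less.IH[of i'] less.prems p by (simp add: row_a_add_p[OF p])
  qed
qed

lemma row_a_diag:
  assumes p: "1 \<le> p" "p \<le> N"
  shows "i < N+2 \<Longrightarrow> row_a p N a i i = 1"
proof (induction i rule: less_induct)
  case (less i)
  show ?case
  proof (cases "i < p")
    case True
    then show ?thesis using less.prems p by (simp add: row_a_below_p)
  next
    case False
    then obtain i' where "i = i' + p" by (metis add.commute le_add_diff_inverse not_less)
    then show ?thesis
      using less.IH[of i'] less.prems p by (simp add: row_a_add_p[OF p] row_a_lower[OF p])
  qed
qed

lemma alpha_eq_row_col:
  assumes p: "1 \<le> p" "p \<le> N"
  shows "alpha p N a i j = (\<Sum>m<N+2. row_a p N a i m * col_a p N a j m)"
proof -
  have "i mod p < N+2"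
    using p by (auto intro: less_le_trans[of _ p])
  moreover have "i mod p + 1 - 1 = i mod p"
    by simp
  ultimately show ?thesis
    unfolding alpha_def S_def row_a_def col_a_def
    by (simp only: pow_mat_add[OF L1_carrier]
        index_mult_mat_sum[OF pow_carrier_mat[OF L1_carrier] pow_carrier_mat[OF L1_carrier]] zero_less_Suc)
qed

(* Since B1 e_0 = (L1^(p+1) - a_0 ... a_(p-1)) e_0, the columns u_j' = (L1^j B1 - B1 L1^j) e_0
   obey a linear flow. *)
definition col_flow_a :: "nat \<Rightarrow> nat \<Rightarrow> (nat \<Rightarrow> real) \<Rightarrow> real mat" where
  "col_flow_a p N a = L1 p N a ^\<^sub>m Suc p - (\<Prod>s<p. a s) \<cdot>\<^sub>m 1\<^sub>m (N+2) - B1 p N a"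

lemma col_a_has_derivative:
  assumes p: "1 \<le> p" "p \<le> N" and sol: "sol_a p N T a" and t: "t \<in> tdom T" and k: "k < N+2"
  shows "((\<lambda>s. col_a p N (\<lambda>i. a i s) j k) has_real_derivative
    (\<Sum>m<N+2. col_flow_a p N (\<lambda>i. a i t) $$ (k,m) * col_a p N (\<lambda>i. a i t) j m)) (at t within tdom T)"
proof -
  let ?A = "L1 p N (\<lambda>i. a i t)" and ?B = "B1 p N (\<lambda>i. a i t)"
  let ?Y = "?A ^\<^sub>m Suc p - (\<Prod>s<p. a s t) \<cdot>\<^sub>m 1\<^sub>m (N+2)"
  have A: "?A ^\<^sub>m j \<in> carrier_mat (N+2) (N+2)" and B: "?B \<in> carrier_mat (N+2) (N+2)"
    and Y: "?Y \<in> carrier_mat (N+2) (N+2)"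
    by auto
  have "has_mat_derivative (N+2) (\<lambda>s. L1 p N (\<lambda>i. a i s) ^\<^sub>m j) (?A ^\<^sub>m j * ?B - ?B * ?A ^\<^sub>m j)
      (at t within tdom T)"
    by (rule has_mat_derivative_pow_commutator[OF L1_carrier B1_carrier L1_has_mat_derivative[OF p(1) sol t]])
  then have deriv: "((\<lambda>s. (L1 p N (\<lambda>i. a i s) ^\<^sub>m j) $$ (k,0)) has_real_derivative
      (?A ^\<^sub>m j * ?B - ?B * ?A ^\<^sub>m j) $$ (k,0)) (at t within tdom T)"
    using k unfolding has_mat_derivative_def by simp
  have "(?A ^\<^sub>m j * ?B - ?B * ?A ^\<^sub>m j) $$ (k,0) = ((?Y - ?B) * ?A ^\<^sub>m j) $$ (k,0)"
  proof (rule commutator_col_eq[OF A B Y _ _ k])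
    show "?Y * ?A ^\<^sub>m j = ?A ^\<^sub>m j * ?Y"
      by (rule commute_diff_smult_one[OF pow_carrier_mat[OF L1_carrier] A pow_mat_commute[OF L1_carrier]])
    show "?B $$ (m, 0) = ?Y $$ (m, 0)" if "m < N+2" for m
      using B1_col_0[OF p(2) that] .
  qed simp
  also have "\<dots> = (\<Sum>m<N+2. (?Y - ?B) $$ (k,m) * (?A ^\<^sub>m j) $$ (m,0))"
    by (rule index_mult_mat_sum[OF _ A k]) (use Y B in auto)
  finally show ?thesis
    using deriv unfolding col_a_def col_flow_a_def by simp
qed

lemma row_a_has_derivative:
  assumes p: "1 \<le> p" "p \<le> N" and sol: "sol_a p N T a" and t: "t \<in> tdom T" and m: "m < N+2"
  shows "((\<lambda>s. row_a p N (\<lambda>k. a k s) i m) has_real_derivative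
    (\<Sum>x<N+2. B1 p N (\<lambda>k. a k t) $$ (x,m) * row_a p N (\<lambda>k. a k t) i x)) (at t within tdom T)"
proof -
  let ?A = "L1 p N (\<lambda>k. a k t) ^\<^sub>m (i div p)" and ?B = "B1 p N (\<lambda>k. a k t)"
  have A: "?A \<in> carrier_mat (N+2) (N+2)" and B: "?B \<in> carrier_mat (N+2) (N+2)"
    by auto
  have l: "i mod p < p" "i mod p < N+2"
    using p by (auto intro: less_le_trans[of _ p])
  have "has_mat_derivative (N+2) (\<lambda>s. L1 p N (\<lambda>k. a k s) ^\<^sub>m (i div p)) (?A * ?B - ?B * ?A)
      (at t within tdom T)"
    by (rule has_mat_derivative_pow_commutator[OF L1_carrier B1_carrier L1_has_mat_derivative[OF p(1) sol t]])
  then have deriv: "((\<lambda>s. (L1 p N (\<lambda>k. a k s) ^\<^sub>m (i div p)) $$ (i mod p, m)) has_real_derivative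
      (?A * ?B - ?B * ?A) $$ (i mod p, m)) (at t within tdom T)"
    using l m unfolding has_mat_derivative_def by simp
  have "(?B * ?A) $$ (i mod p, m) = (\<Sum>x<N+2. ?B $$ (i mod p, x) * ?A $$ (x, m))"
    by (rule index_mult_mat_sum[OF B A l(2) m])
  also have "\<dots> = 0"
    using l by (simp add: B1_index)
  finally have "(?A * ?B - ?B * ?A) $$ (i mod p, m) = (?A * ?B) $$ (i mod p, m)"
    using l m A B by simp
  also have "\<dots> = (\<Sum>x<N+2. ?A $$ (i mod p, x) * ?B $$ (x, m))"
    by (rule index_mult_mat_sum[OF A B l(2) m])
  finally show ?thesis
    using deriv unfolding row_a_def by (simp add: mult.commute)
qed

lemma first_integral_C:
  assumes p: "1 \<le> p" "p \<le> N" and T: "0 < T" and sol: "sol_a p N T a"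
    and rec: "\<forall>t\<in>tdom T. \<forall>i j. j \<ge> N + 2 \<longrightarrow>
      alpha p N (\<lambda>k. a k t) i j = (\<Sum>v=0..N+1. C v t * alpha p N (\<lambda>k. a k t) i (j - v - 1))"
    and v: "v \<le> N + 1" and t: "t \<in> tdom T"
  shows "C v t = C v 0"
proof -
  interpret triangular_flow "tdom T" "N+2" "\<lambda>j s k. col_a p N (\<lambda>i. a i s) j k"
    "\<lambda>t k m. col_flow_a p N (\<lambda>i. a i t) $$ (k,m)"
  proof
    show "((\<lambda>s. col_a p N (\<lambda>i. a i s) j k) has_real_derivative
        (\<Sum>m<N+2. col_flow_a p N (\<lambda>i. a i t) $$ (k,m) * col_a p N (\<lambda>i. a i t) j m)) (at t within tdom T)"
      if "t \<in> tdom T" "k < N+2" for t j k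
      using col_a_has_derivative[OF p sol that] .
    show "col_a p N (\<lambda>i. a i t) j j \<noteq> 0" if "t \<in> tdom T" "j < N+2" for t j
      using that by (auto simp: col_a_diag sol_a_nonzero[OF sol])
  qed (auto simp: tdom_convex tdom_nontrivial col_a_lower)
  show ?thesis
  proof (rule pairing_recurrence_coeff_constant[where y="\<lambda>s i m. row_a p N (\<lambda>k. a k s) i m" and c=C])
    fix s i assume "s \<in> tdom T" "i < N+2"
    then show "(\<Sum>m<N+2. row_a p N (\<lambda>k. a k s) i m * col_a p N (\<lambda>i. a i s) (N+2) m)
      = (\<Sum>v<N+2. C v s * (\<Sum>m<N+2. row_a p N (\<lambda>k. a k s) i m * col_a p N (\<lambda>i. a i s) (N + 2 - v - 1) m))"
      using rec by (simp add: alpha_eq_row_col[OF p] atLeast0AtMost lessThan_Suc_atMost[symmetric])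
  qed (use v t T zero_in_tdom row_a_diag[OF p] row_a_lower[OF p] in auto)
qed

lemma first_integral_D:
  assumes p: "1 \<le> p" "p \<le> N" and T: "0 < T" and sol: "sol_a p N T a"
    and rec: "\<forall>t\<in>tdom T. \<forall>i j. i \<ge> N + 2 \<longrightarrow>
      alpha p N (\<lambda>k. a k t) i j = (\<Sum>v=0..N+1. D v t * alpha p N (\<lambda>k. a k t) (i - v - 1) j)"
    and v: "v \<le> N + 1" and t: "t \<in> tdom T"
  shows "D v t = D v 0"
proof -
  interpret triangular_flow "tdom T" "N+2" "\<lambda>i s m. row_a p N (\<lambda>k. a k s) i m"
    "\<lambda>t m x. B1 p N (\<lambda>k. a k t) $$ (x,m)"
  proof
    show "((\<lambda>s. row_a p N (\<lambda>k. a k s) i m) has_real_derivative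
        (\<Sum>x<N+2. B1 p N (\<lambda>k. a k t) $$ (x,m) * row_a p N (\<lambda>k. a k t) i x)) (at t within tdom T)"
      if "t \<in> tdom T" "m < N+2" for t i m
      using row_a_has_derivative[OF p sol that] .
  qed (auto simp: tdom_convex tdom_nontrivial row_a_diag[OF p] row_a_lower[OF p])
  show ?thesis
  proof (rule pairing_recurrence_coeff_constant[where y="\<lambda>s j m. col_a p N (\<lambda>k. a k s) j m" and c=D])
    fix s j assume "s \<in> tdom T" "j < N+2"
    then show "(\<Sum>m<N+2. col_a p N (\<lambda>k. a k s) j m * row_a p N (\<lambda>k. a k s) (N+2) m)
      = (\<Sum>v<N+2. D v s * (\<Sum>m<N+2. col_a p N (\<lambda>k. a k s) j m * row_a p N (\<lambda>k. a k s) (N + 2 - v - 1) m))"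
      using rec by (simp add: alpha_eq_row_col[OF p] atLeast0AtMost lessThan_Suc_atMost[symmetric] mult.commute)
  qed (use v t T zero_in_tdom col_a_diag col_a_lower sol_a_nonzero[OF sol] in \<open>auto simp: prod_zero_iff\<close>)
qed

section \<open>The sum system\<close>

definition consec_sum :: "nat \<Rightarrow> nat \<Rightarrow> (nat \<Rightarrow> real) \<Rightarrow> int \<Rightarrow> real" where
  "consec_sum p N b x = (\<Sum>s=0..p. zext N b (x + int s))"

(* The sign makes the Lax equation read L2' = L2 B2 - B2 L2, as for L1. *)
definition B2 :: "nat \<Rightarrow> nat \<Rightarrow> (nat \<Rightarrow> real) \<Rightarrow> real mat" where
  "B2 p N b = Matrix.mat (N+p+1) (N+p+1) (\<lambda>(i,j).
     - ((if j = i + p + 1 then 1 else 0) + (if i = j then consec_sum p N b (int i - int p) else 0)))"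

lemma B2_carrier [simp]: "B2 p N b \<in> carrier_mat (N+p+1) (N+p+1)"
  by (simp add: B2_def)

lemma L2_carrier [simp]: "L2 p N b \<in> carrier_mat (N+p+1) (N+p+1)"
  by (simp add: L2_def)

lemma dim_B2 [simp]: "dim_row (B2 p N b) = N+p+1" "dim_col (B2 p N b) = N+p+1"
  by (simp_all add: B2_def)

lemma dim_L2 [simp]: "dim_row (L2 p N b) = N+p+1" "dim_col (L2 p N b) = N+p+1"
  by (simp_all add: L2_def)

lemma B2_index:
  "i < N+p+1 \<Longrightarrow> j < N+p+1 \<Longrightarrow> B2 p N b $$ (i,j)
    = - ((if j = i + p + 1 then 1 else 0) + (if i = j then consec_sum p N b (int i - int p) else 0))"
  by (simp add: B2_def)

lemma L2_mult_left:
  "X \<in> carrier_mat (N+p+1) (N+p+1) \<Longrightarrow> i < N+p+1 \<Longrightarrow> j < N+p+1 \<Longrightarrow> (L2 p N b * X) $$ (i,j)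
    = (if i + 1 < N+p+1 then X $$ (i + 1, j) else 0) + (if p \<le> i then b (i - p) * X $$ (i - p, j) else 0)"
  unfolding L2_eq_two_band by (rule two_band_mult_left)

lemma L2_mult_right:
  "X \<in> carrier_mat (N+p+1) (N+p+1) \<Longrightarrow> i < N+p+1 \<Longrightarrow> j < N+p+1 \<Longrightarrow> (X * L2 p N b) $$ (i,j)
    = (if 1 \<le> j then X $$ (i, j - 1) else 0) + (if j + p < N+p+1 then X $$ (i, j + p) * b j else 0)"
  unfolding L2_eq_two_band by (rule two_band_mult_right)

lemma L2_B2_commutator:
  assumes p: "1 \<le> p" and ij: "i < N+p+1" "j < N+p+1"
  shows "(L2 p N b * B2 p N b - B2 p N b * L2 p N b) $$ (i,j)
    = (if i = j + p then b j * ((\<Sum>k=1..p. zext N b (int j + int k)) - (\<Sum>k=1..p. zext N b (int j - int k)))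
       else 0)"
proof -
  let ?Q = "consec_sum p N b"
  have LB: "(L2 p N b * B2 p N b) $$ (i,j)
      = - (if j = i + p + 2 then 1 else 0) - (if j = i + 1 then ?Q (int (i + 1) - int p) + (if p \<le> i then b (i - p) else 0) else 0)
        - (if i = j + p then b j * ?Q (int j - int p) else 0)"
    using L2_mult_left[OF B2_carrier ij] ij p by (auto simp: B2_index)
  have BL: "(B2 p N b * L2 p N b) $$ (i,j)
      = - (if j = i + p + 2 then 1 else 0) - (if j = i + 1 then ?Q (int i - int p) + (if i + 1 \<le> N then b (i + 1) else 0) else 0)
        - (if i = j + p then ?Q (int j) * b j else 0)"
    using L2_mult_right[OF B2_carrier ij] ij p by (auto simp: B2_index)
  show ?thesis
  proof (cases "i = j + p")
    case True
    then have "(L2 p N b * B2 p N b - B2 p N b * L2 p N b) $$ (i,j) = b j * (?Q (int j) - ?Q (int j - int p))"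
      using LB BL ij by (simp add: algebra_simps)
    also have "\<dots> = b j * ((\<Sum>k=1..p. zext N b (int j + int k)) - (\<Sum>k=1..p. zext N b (int j - int k)))"
      using sum.int_window_first[of "zext N b" "int j" p] sum.int_window_last[of "zext N b" "int j" p]
      by (simp add: consec_sum_def)
    finally show ?thesis
      using True by simp
  next
    case False
    have "?Q (int (i + 1) - int p) + (if p \<le> i then b (i - p) else 0)
        = ?Q (int i - int p) + (if i + 1 \<le> N then b (i + 1) else 0)" if "i + 1 < N+p+1"
    proof -
      have "zext N b (int i - int p) = (if p \<le> i then b (i - p) else 0)"
        using that by (auto simp: zext_def nat_diff_distrib)
      then show ?thesis
        using sum.int_window_shift[of "zext N b" "int i - int p" p] zext_int[of N b "i + 1"]
        by (simp add: consec_sum_def algebra_simps)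
    qed
    then show ?thesis
      using False ij by (simp add: LB BL)
  qed
qed

lemma L2_has_mat_derivative:
  assumes p: "1 \<le> p" and sol: "sol_b p N T b" and t: "t \<in> tdom T"
  shows "has_mat_derivative (N+p+1) (\<lambda>s. L2 p N (\<lambda>k. b k s))
    (L2 p N (\<lambda>k. b k t) * B2 p N (\<lambda>k. b k t) - B2 p N (\<lambda>k. b k t) * L2 p N (\<lambda>k. b k t))
    (at t within tdom T)"
  unfolding has_mat_derivative_def
proof (intro allI impI)
  fix i j assume ij: "i < N+p+1" "j < N+p+1"
  have entry: "(\<lambda>s. L2 p N (\<lambda>k. b k s) $$ (i,j))
      = (\<lambda>s. (if j = i + 1 then 1 else 0) + (if i = j + p then b j s else 0))"
    using ij by (auto simp: L2_def)
  show "((\<lambda>s. L2 p N (\<lambda>k. b k s) $$ (i,j)) has_real_derivative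
      (L2 p N (\<lambda>k. b k t) * B2 p N (\<lambda>k. b k t) - B2 p N (\<lambda>k. b k t) * L2 p N (\<lambda>k. b k t)) $$ (i,j))
      (at t within tdom T)"
  proof (cases "i = j + p")
    case True
    then have "j \<le> N" using ij by simp
    then have "((\<lambda>s. b j s) has_real_derivative b j t * ((\<Sum>k=1..p. zext N (\<lambda>k. b k t) (int j + int k))
        - (\<Sum>k=1..p. zext N (\<lambda>k. b k t) (int j - int k)))) (at t within tdom T)"
      using sol t unfolding sol_b_def by blast
    then show ?thesis
      using True unfolding entry L2_B2_commutator[OF p ij] by simp
  next
    case False
    then show ?thesis unfolding entry L2_B2_commutator[OF p ij] by simp
  qed
qed

lemma sol_b_nonzero: "sol_b p N T b \<Longrightarrow> t \<in> tdom T \<Longrightarrow> i \<le> N \<Longrightarrow> b i t \<noteq> 0"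
  unfolding sol_b_def by blast

definition row_b :: "nat \<Rightarrow> nat \<Rightarrow> (nat \<Rightarrow> real) \<Rightarrow> nat \<Rightarrow> nat \<Rightarrow> real" where
  "row_b p N b k m = (L2 p N b ^\<^sub>m k) $$ (0, m)"

definition col_b :: "nat \<Rightarrow> nat \<Rightarrow> (nat \<Rightarrow> real) \<Rightarrow> nat \<Rightarrow> nat \<Rightarrow> real" where
  "col_b p N b j m = (L2 p N b ^\<^sub>m (j div p)) $$ (m, j mod p)"

lemma row_b_Suc:
  "m < N+p+1 \<Longrightarrow> row_b p N b (Suc k) m
    = (if 1 \<le> m then row_b p N b k (m - 1) else 0) + (if m + p < N+p+1 then row_b p N b k (m + p) * b m else 0)"
  unfolding row_b_def pow_mat.simps(2) by (rule L2_mult_right) auto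

lemma row_b_lower: "k < m \<Longrightarrow> m < N+p+1 \<Longrightarrow> row_b p N b k m = 0"
proof (induction k arbitrary: m)
  case 0
  then show ?case by (simp add: row_b_def)
next
  case (Suc k)
  then show ?case by (simp add: row_b_Suc)
qed

lemma row_b_diag: "k < N+p+1 \<Longrightarrow> row_b p N b k k = 1"
proof (induction k)
  case 0
  then show ?case by (simp add: row_b_def)
next
  case (Suc k)
  then show ?case by (simp add: row_b_Suc row_b_lower)
qed

lemma row_b_upto_p: "k \<le> p \<Longrightarrow> m < N+p+1 \<Longrightarrow> row_b p N b k m = (if m = k then 1 else 0)"
proof (induction k arbitrary: m)
  case 0
  then show ?case by (simp add: row_b_def)
next
  case (Suc k)
  then show ?case by (auto simp: row_b_Suc)
qed

lemma B2_row_0: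
  assumes p: "1 \<le> p" and m: "m < N+p+1"
  shows "B2 p N b $$ (0, m) = (- (L2 p N b ^\<^sub>m Suc p)) $$ (0, m)"
proof -
  have "consec_sum p N b (- int p) = b 0"
    using sum.int_window_last[of "zext N b" 0 p] by (simp add: consec_sum_def zext_def)
  moreover have "row_b p N b (Suc p) m = (if m = p + 1 then 1 else 0) + (if m = 0 then b 0 else 0)"
    using p m by (auto simp: row_b_Suc row_b_upto_p)
  ultimately show ?thesis
    using m by (simp add: B2_index row_b_def)
qed

lemma col_b_add_p:
  assumes p: "1 \<le> p" and m: "m < N+p+1"
  shows "col_b p N b (j + p) m
    = (if m + 1 < N+p+1 then col_b p N b j (m + 1) else 0) + (if p \<le> m then b (m - p) * col_b p N b j (m - p) else 0)"
proof -
  have d: "(j + p) div p = Suc (j div p)" "(j + p) mod p = j mod p"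
    using p by auto
  have l: "j mod p < N+p+1"
    using p by (auto intro: less_le_trans[of _ p])
  show ?thesis
    unfolding col_b_def d pow_mat_Suc_left[OF L2_carrier] L2_mult_left[OF pow_carrier_mat[OF L2_carrier] m l] ..
qed

lemma col_b_below_p: "j < p \<Longrightarrow> m < N+p+1 \<Longrightarrow> col_b p N b j m = (if m = j then 1 else 0)"
  by (simp add: col_b_def)

lemma col_b_lower:
  assumes p: "1 \<le> p"
  shows "j < m \<Longrightarrow> m < N+p+1 \<Longrightarrow> col_b p N b j m = 0"
proof (induction j arbitrary: m rule: less_induct)
  case (less j)
  show ?case
  proof (cases "j < p")
    case True
    then show ?thesis using less.prems by (simp add: col_b_below_p)
  next
    case False
    then obtain j' where "j = j' + p" by (metis add.commute le_add_diff_inverse not_less)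
    then show ?thesis
      using less.IH[of j'] less.prems p by (simp add: col_b_add_p[OF p])
  qed
qed

lemma col_b_diag_nonzero:
  assumes p: "1 \<le> p" and b: "\<And>i. i \<le> N \<Longrightarrow> b i \<noteq> 0"
  shows "j < N+p+1 \<Longrightarrow> col_b p N b j j \<noteq> 0"
proof (induction j rule: less_induct)
  case (less j)
  show ?case
  proof (cases "j < p")
    case True
    then show ?thesis using less.prems by (simp add: col_b_below_p)
  next
    case False
    then obtain j' where "j = j' + p" by (metis add.commute le_add_diff_inverse not_less)
    then show ?thesis
      using less.IH[of j'] less.prems p b[of j'] by (simp add: col_b_add_p[OF p] col_b_lower[OF p])
  qed
qed

lemma St_eq_row_col:
  assumes p: "1 \<le> p"
  shows "St p N b (j mod p + 1) (k + j div p) = (\<Sum>m<N+p+1. row_b p N b k m * col_b p N b j m)"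
proof -
  have "j mod p < N+p+1"
    using p by (auto intro: less_le_trans[of _ p])
  moreover have "j mod p + 1 - 1 = j mod p"
    by simp
  ultimately show ?thesis
    unfolding St_def row_b_def col_b_def
    by (simp only: pow_mat_add[OF L2_carrier]
        index_mult_mat_sum[OF pow_carrier_mat[OF L2_carrier] pow_carrier_mat[OF L2_carrier]] zero_less_Suc)
qed

(* Since row 0 of B2 is minus row 0 of L2^(p+1), the rows e_0^T (L2^k B2 - B2 L2^k)
   obey a linear flow. *)
definition row_flow_b :: "nat \<Rightarrow> nat \<Rightarrow> (nat \<Rightarrow> real) \<Rightarrow> real mat" where
  "row_flow_b p N b = B2 p N b + L2 p N b ^\<^sub>m Suc p"

lemma row_b_has_derivative:
  assumes p: "1 \<le> p" and sol: "sol_b p N T b" and t: "t \<in> tdom T" and m: "m < N+p+1"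
  shows "((\<lambda>s. row_b p N (\<lambda>i. b i s) k m) has_real_derivative
    (\<Sum>x<N+p+1. row_flow_b p N (\<lambda>i. b i t) $$ (x,m) * row_b p N (\<lambda>i. b i t) k x)) (at t within tdom T)"
proof -
  let ?A = "L2 p N (\<lambda>i. b i t)" and ?B = "B2 p N (\<lambda>i. b i t)"
  let ?Y = "- (?A ^\<^sub>m Suc p)"
  have A: "?A ^\<^sub>m k \<in> carrier_mat (N+p+1) (N+p+1)" and B: "?B \<in> carrier_mat (N+p+1) (N+p+1)"
    and Y: "?Y \<in> carrier_mat (N+p+1) (N+p+1)"
    by auto
  have "has_mat_derivative (N+p+1) (\<lambda>s. L2 p N (\<lambda>i. b i s) ^\<^sub>m k) (?A ^\<^sub>m k * ?B - ?B * ?A ^\<^sub>m k)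
      (at t within tdom T)"
    by (rule has_mat_derivative_pow_commutator[OF L2_carrier B2_carrier L2_has_mat_derivative[OF p sol t]])
  then have deriv: "((\<lambda>s. (L2 p N (\<lambda>i. b i s) ^\<^sub>m k) $$ (0,m)) has_real_derivative
      (?A ^\<^sub>m k * ?B - ?B * ?A ^\<^sub>m k) $$ (0,m)) (at t within tdom T)"
    using m unfolding has_mat_derivative_def by simp
  have "(?A ^\<^sub>m k * ?B - ?B * ?A ^\<^sub>m k) $$ (0,m) = (?A ^\<^sub>m k * (?B - ?Y)) $$ (0,m)"
  proof (rule commutator_row_eq[OF A B Y _ _ _ m])
    show "?Y * ?A ^\<^sub>m k = ?A ^\<^sub>m k * ?Y"
      using pow_mat_commute[OF L2_carrier, where k="Suc p" and l=k] A
      by (simp del: pow_mat.simps)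
    show "?B $$ (0, x) = ?Y $$ (0, x)" if "x < N+p+1" for x
      using B2_row_0[OF p that] .
  qed simp
  also have "\<dots> = (\<Sum>x<N+p+1. (?A ^\<^sub>m k) $$ (0,x) * (?B - ?Y) $$ (x,m))"
    by (rule index_mult_mat_sum[OF A _ _ m]) (use Y B in auto)
  also have "\<dots> = (\<Sum>x<N+p+1. row_flow_b p N (\<lambda>i. b i t) $$ (x,m) * (?A ^\<^sub>m k) $$ (0,x))"
    using m by (intro sum.cong) (auto simp: row_flow_b_def)
  finally show ?thesis
    using deriv unfolding row_b_def by simp
qed

lemma first_integral_Ct:
  assumes p: "1 \<le> p" and T: "0 < T" and sol: "sol_b p N T b"
    and rec: "\<forall>t\<in>tdom T. \<forall>l k. 1 \<le> l \<and> l \<le> p \<and> k \<ge> N + p + 1 \<longrightarrow>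
      St p N (\<lambda>m. b m t) l k = (\<Sum>v=0..N+p. Ct v t * St p N (\<lambda>m. b m t) l (k - v - 1))"
    and v: "v \<le> N + p" and t: "t \<in> tdom T"
  shows "Ct v t = Ct v 0"
proof -
  interpret triangular_flow "tdom T" "N+p+1" "\<lambda>k s m. row_b p N (\<lambda>i. b i s) k m"
    "\<lambda>t m x. row_flow_b p N (\<lambda>i. b i t) $$ (x,m)"
  proof
    show "((\<lambda>s. row_b p N (\<lambda>i. b i s) k m) has_real_derivative
        (\<Sum>x<N+p+1. row_flow_b p N (\<lambda>i. b i t) $$ (x,m) * row_b p N (\<lambda>i. b i t) k x)) (at t within tdom T)"
      if "t \<in> tdom T" "m < N+p+1" for t k m
      using row_b_has_derivative[OF p sol that] .
  qed (auto simp: tdom_convex tdom_nontrivial row_b_diag row_b_lower)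
  show ?thesis
  proof (rule pairing_recurrence_coeff_constant[where y="\<lambda>s j m. col_b p N (\<lambda>i. b i s) j m" and c=Ct])
    fix s j assume s: "s \<in> tdom T" and "j < N+p+1"
    have l: "1 \<le> j mod p + 1" "j mod p + 1 \<le> p"
      using p by (auto simp: Suc_leI)
    have "St p N (\<lambda>m. b m s) (j mod p + 1) (N + p + 1 + j div p)
        = (\<Sum>v<N+p+1. Ct v s * St p N (\<lambda>m. b m s) (j mod p + 1) (N + p + 1 - v - 1 + j div p))"
      using rec s l by (auto simp: atLeast0AtMost lessThan_Suc_atMost[symmetric] intro!: sum.cong)
    then show "(\<Sum>m<N+p+1. col_b p N (\<lambda>i. b i s) j m * row_b p N (\<lambda>i. b i s) (N+p+1) m)
      = (\<Sum>v<N+p+1. Ct v s * (\<Sum>m<N+p+1. col_b p N (\<lambda>i. b i s) j m * row_b p N (\<lambda>i. b i s) (N + p + 1 - v - 1) m))"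
      by (simp only: St_eq_row_col[OF p] mult.commute)
  qed (use v t T zero_in_tdom col_b_diag_nonzero[OF p] col_b_lower[OF p] sol_b_nonzero[OF sol] in auto)
qed

theorem theorem4:
  fixes p N :: nat and T :: ereal
  assumes "p \<ge> 1" and "N \<ge> 2 * p - 1" and "0 < T"
  shows
   "(\<forall>a C. sol_a p N T a
       \<and> (\<forall>t\<in>tdom T. \<forall>i j. j \<ge> N + 2 \<longrightarrow>
             alpha p N (\<lambda>k. a k t) i j
               = (\<Sum>v=0..N+1. C v t * alpha p N (\<lambda>k. a k t) i (j - v - 1)))
       \<longrightarrow> (\<forall>v\<le>N+1. \<forall>t\<in>tdom T. C v t = C v 0))
  \<and> (\<forall>a D. sol_a p N T a
       \<and> (\<forall>t\<in>tdom T. \<forall>i j. i \<ge> N + 2 \<longrightarrow>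
             alpha p N (\<lambda>k. a k t) i j
               = (\<Sum>v=0..N+1. D v t * alpha p N (\<lambda>k. a k t) (i - v - 1) j))
       \<longrightarrow> (\<forall>v\<le>N+1. \<forall>t\<in>tdom T. D v t = D v 0))
  \<and> (\<forall>b Ct. sol_b p N T b
       \<and> (\<forall>t\<in>tdom T. \<forall>l k. 1 \<le> l \<and> l \<le> p \<and> k \<ge> N + p + 1 \<longrightarrow>
             St p N (\<lambda>m. b m t) l k
               = (\<Sum>v=0..N+p. Ct v t * St p N (\<lambda>m. b m t) l (k - v - 1)))
       \<longrightarrow> (\<forall>v\<le>N+p. \<forall>t\<in>tdom T. Ct v t = Ct v 0))"
proof -
  have "p \<le> N"
    using assms(1,2) by linarith
  then show ?thesis
    using first_integral_C[OF assms(1) _ assms(3)] first_integral_D[OF assms(1) _ assms(3)]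
      first_integral_Ct[OF assms(1) assms(3)]
    by blast
qed

end
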